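(* For each $\eta\in(0,\pi/3)$, $f_1(\mathrm{co}(V))\cup f_2(\mathrm{co}(V))\subset\mathrm{co}(V)$, where $V=\{b_0\}\cup\{z_k:k\ge0\}\cup\{w_k:k\ge1\}$.
   Context: For $\eta\in(0,\pi/3)$ let $a=\frac{e^{-i\eta}}{2\cos\eta}$, $f_1(z)=az$, $f_2(z)=1-\bar az$, $c=\frac{1}{1-|a|^4}$, and for integers $k\ge0$ put $z_k=ca^{k+1}$, $w_k=1-c|a|^2a^k$, $b_k=a+c|a|^4a^k$. $\mathrm{co}$ denotes convex hull. *)

theory Defs
  imports "HOL-Analysis.Analysis"
begin

definition a_par :: "real \<Rightarrow> complex" where
  "a_par \<eta> = exp (- \<i> * complex_of_real \<eta>) / complex_of_real (2 * cos \<eta>)"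

definition f1 :: "real \<Rightarrow> complex \<Rightarrow> complex" where
  "f1 \<eta> z = a_par \<eta> * z"

definition f2 :: "real \<Rightarrow> complex \<Rightarrow> complex" where
  "f2 \<eta> z = 1 - cnj (a_par \<eta>) * z"

definition c_par :: "real \<Rightarrow> real" where
  "c_par \<eta> = 1 / (1 - cmod (a_par \<eta>) ^ 4)"

definition zk :: "real \<Rightarrow> nat \<Rightarrow> complex" where
  "zk \<eta> k = complex_of_real (c_par \<eta>) * a_par \<eta> ^ (k + 1)"

definition wk :: "real \<Rightarrow> nat \<Rightarrow> complex" where
  "wk \<eta> k = 1 - complex_of_real (c_par \<eta> * cmod (a_par \<eta>) ^ 2) * a_par \<eta> ^ k"

definition bk :: "real \<Rightarrow> nat \<Rightarrow> complex" where
  "bk \<eta> k = a_par \<eta> + complex_of_real (c_par \<eta> * cmod (a_par \<eta>) ^ 4) * a_par \<eta> ^ k"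

definition Vset :: "real \<Rightarrow> complex set" where
  "Vset \<eta> = {bk \<eta> 0} \<union> {zk \<eta> k | k. k \<ge> 0} \<union> {wk \<eta> k | k. k \<ge> 1}"

end

theory Submission
  imports Defs
begin

(* Write a = a_par eta. Since Re a = 1/2 we have cnj a = 1 - a and a^2 = a - r with
   r = |a|^2 in [1/4, 1), so the powers of a are real combinations of 1 and a governed by
   the Lucas sequence U = lucasU r:  a^(n+1) = U(n+1) a - r U(n).  The key estimate is
   -r <= U(n) <= 2 - r, proved by exhibiting a polygon that contains (0, 1) and is mapped
   into its convex hull by the linear step (x, y) -> (y, y - r x) of the recurrence.
   As f1 is linear and f2 affine, it suffices to map the points of V into co(V): f1 sends
   z_k to z_(k+1), f2 sends z_k to w_k and w_(k+1) to a + c r^2 a^k, and every remaining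
   image is an explicit convex combination of at most three points of V, whose weights are
   nonnegative by the bounds on U. *)

lemma affine_image_convex_hull_subset:
  fixes g :: "'a::real_vector \<Rightarrow> 'a"
  assumes "linear g" and "(\<lambda>x. b + g x) ` S \<subseteq> convex hull S"
  shows "(\<lambda>x. b + g x) ` (convex hull S) \<subseteq> convex hull S"
proof -
  have "(\<lambda>x. b + g x) ` (convex hull S) = (\<lambda>x. b + x) ` g ` (convex hull S)"
    by (simp add: image_image)
  also have "\<dots> = convex hull ((\<lambda>x. b + x) ` g ` S)"
    by (simp add: convex_hull_linear_image[OF assms(1)] convex_hull_translation)
  also have "\<dots> = convex hull ((\<lambda>x. b + g x) ` S)"
    by (simp add: image_image)
  finally have "(\<lambda>x. b + g x) ` (convex hull S) = convex hull ((\<lambda>x. b + g x) ` S)" .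
  then show ?thesis
    using assms(2) by (simp add: convex_hull_subset)
qed

lemma in_convex_hull_3_weighted:
  fixes x y z p :: "'a::real_vector"
  assumes "x \<in> S" "y \<in> S" "z \<in> S"
    and "0 < d" "0 \<le> l1" "0 \<le> l2" "0 \<le> l3" "l1 + l2 + l3 = d"
    and "d *\<^sub>R p = l1 *\<^sub>R x + l2 *\<^sub>R y + l3 *\<^sub>R z"
  shows "p \<in> convex hull S"
proof -
  have "p = (l1/d) *\<^sub>R x + (l2/d) *\<^sub>R y + (l3/d) *\<^sub>R z"
    using arg_cong[OF assms(9), of "scaleR (1/d)"] \<open>0 < d\<close> by (simp add: scaleR_add_right)
  moreover have "l1/d + l2/d + l3/d = 1"
    using assms(4,8) by (simp add: add_divide_distrib[symmetric])
  ultimately have "p \<in> convex hull {x, y, z}"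
    unfolding convex_hull_3 using assms(4-7) by fastforce
  moreover have "convex hull {x, y, z} \<subseteq> convex hull S"
    using assms(1-3) by (simp add: hull_mono)
  ultimately show ?thesis by blast
qed

fun lucasU :: "real \<Rightarrow> nat \<Rightarrow> real" where
  "lucasU r 0 = 0"
| "lucasU r (Suc 0) = 1"
| "lucasU r (Suc (Suc n)) = lucasU r (Suc n) - r * lucasU r n"

definition lucas_step :: "real \<Rightarrow> real \<times> real \<Rightarrow> real \<times> real" where
  "lucas_step r = (\<lambda>(x, y). (y, y - r * x))"

lemma linear_lucas_step: "linear (lucas_step r)"
  by (rule linearI) (auto simp: lucas_step_def algebra_simps)

lemma lucasU_bounds_from_invariant_hull:
  assumes "(0, 1) \<in> convex hull S" and "lucas_step r ` S \<subseteq> convex hull S"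
    and "\<And>s. s \<in> S \<Longrightarrow> lo \<le> fst s \<and> fst s \<le> hi"
  shows "lo \<le> lucasU r n \<and> lucasU r n \<le> hi"
proof -
  have invariant: "lucas_step r ` (convex hull S) \<subseteq> convex hull S"
    using affine_image_convex_hull_subset[OF linear_lucas_step, where b=0] assms(2) by simp
  have pair: "(lucasU r n, lucasU r (Suc n)) \<in> convex hull S"
  proof (induction n)
    case 0
    then show ?case using assms(1) by simp
  next
    case (Suc n)
    then have "lucas_step r (lucasU r n, lucasU r (Suc n)) \<in> convex hull S"
      using invariant by blast
    then show ?case by (simp add: lucas_step_def)
  qed
  have "convex hull S \<subseteq> fst -` {lo..hi}"
    by (rule hull_minimal) (use assms(3) convex_linear_vimage[OF linear_fst] in auto)
  then show ?thesis using pair by auto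
qed

(* The polygon below is invariant for r <= 2 - sqrt 2, the one of lucasU_bounds_large
   for r >= 0.544; 11/20 lies in between. *)
lemma lucasU_bounds_small:
  assumes "0 \<le> r" and "r \<le> 11/20"
  shows "- r \<le> lucasU r n \<and> lucasU r n \<le> 2 - r"
proof -
  define S where "S = {(-r, -r), (0, -r), (1, 0), (2 - r, r), (2 - r, 2 - r), (0, 2 - r),
    (-r, 2 - r - r^2)}"
  have r_squared_le: "r^2 \<le> r"
    using assms by (simp add: power2_eq_square mult_left_le_one_le)
  have quadratic_nonneg: "0 \<le> r^2 - 4*r + 2"
    using power_mono[of "29/20" "2 - r" 2] assms by (simp add: power2_eq_square algebra_simps)
  have "(0, 1) \<in> convex hull S"
    by (rule in_convex_hull_3_weighted[of "(0, -r)" _ "(0, 2 - r)" "(0, -r)" 2 "1 - r" "1 + r" 0])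
      (use assms in \<open>auto simp: S_def algebra_simps\<close>)
  moreover have "lucas_step r ` S \<subseteq> convex hull S"
  proof -
    have "lucas_step r (-r, -r) \<in> convex hull S"
      by (rule in_convex_hull_3_weighted[of "(-r, -r)" _ "(-r, 2 - r - r^2)" "(-r, -r)"
            "2 - r^2" "2 - 2*r^2" "r^2" 0])
        (use assms r_squared_le in \<open>auto simp: S_def lucas_step_def
          algebra_simps power2_eq_square\<close>)
    moreover have "lucas_step r (2 - r, r) \<in> convex hull S"
      by (rule in_convex_hull_3_weighted[of "(0, -r)" _ "(1, 0)" "(0, -r)" 1 "1 - r" r 0])
        (use assms in \<open>auto simp: S_def lucas_step_def algebra_simps\<close>)
    moreover have "lucas_step r (2 - r, 2 - r) \<in> convex hull S"
      by (rule in_convex_hull_3_weighted[of "(2 - r, r)" _ "(2 - r, 2 - r)" "(2 - r, r)"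
            "2*(1 - r)" "r*(2 - r)" "r^2 - 4*r + 2" 0])
        (use assms quadratic_nonneg r_squared_le in \<open>auto simp: S_def lucas_step_def
          algebra_simps power2_eq_square\<close>)
    moreover have "lucas_step r (-r, 2 - r - r^2) \<in> convex hull S"
      by (rule in_convex_hull_3_weighted[of "(0, 2 - r)" _ "(2 - r, 2 - r)" "(0, 2 - r)"
            "2 - r" "r^2" "2 - r - r^2" 0])
        (use assms r_squared_le in \<open>auto simp: S_def lucas_step_def
          algebra_simps power2_eq_square\<close>)
    ultimately show ?thesis
      by (auto simp: S_def lucas_step_def intro: hull_inc)
  qed
  moreover have "\<And>s. s \<in> S \<Longrightarrow> - r \<le> fst s \<and> fst s \<le> 2 - r"
    using assms by (auto simp: S_def)
  ultimately show ?thesis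
    by (rule lucasU_bounds_from_invariant_hull)
qed

lemma lucasU_bounds_large:
  assumes "11/20 \<le> r" and "r \<le> 1"
  shows "- r \<le> lucasU r n \<and> lucasU r n \<le> 2 - r"
proof -
  \<comment> \<open>the first six points of the orbit of (0, 1)\<close>
  define S where "S = {(0, 1), (1, 1), (1, 1 - r), (1 - r, 1 - 2*r), (1 - 2*r, 1 - 3*r + r^2),
    (1 - 3*r + r^2, 1 - 4*r + 3*r^2)}"
  have cubic_nonneg: "0 \<le> r^3 + r^2 + r - 1"
    using power_mono[of "11/20" r 2] power_mono[of "11/20" r 3] assms by (simp add: power_divide)
  have cubic_nonneg': "0 \<le> r^3 - r + 1"
    using assms zero_le_power[of r 3] by linarith
  have "lucas_step r (1 - 3*r + r^2, 1 - 4*r + 3*r^2) \<in> convex hull S"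
  proof (rule in_convex_hull_3_weighted[of "(0, 1)" _ "(1, 1)" "(1 - 3*r + r^2, 1 - 4*r + 3*r^2)"
        "4 - 3*r" "r*(r^3 - r + 1)" "(1 - r)*(r^3 + r^2 + r - 1)" "(1 - r)*(5 - r)"])
    show "0 \<le> r*(r^3 - r + 1)" "0 \<le> (1 - r)*(r^3 + r^2 + r - 1)" "0 \<le> (1 - r)*(5 - r)"
      using assms cubic_nonneg cubic_nonneg' by simp_all
  qed (use assms in \<open>auto simp: S_def lucas_step_def
      algebra_simps power2_eq_square power3_eq_cube\<close>)
  then have "lucas_step r ` S \<subseteq> convex hull S"
    by (auto simp: S_def lucas_step_def algebra_simps power2_eq_square intro: hull_inc)
  moreover have "(0, 1) \<in> convex hull S"
    by (simp add: S_def hull_inc)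
  moreover have "\<And>s. s \<in> S \<Longrightarrow> - r \<le> fst s \<and> fst s \<le> 2 - r"
    using assms power_mono[of r 1 2] zero_le_power2[of "1 - r"]
    by (auto simp: S_def power2_eq_square algebra_simps)
  ultimately show ?thesis
    by (intro lucasU_bounds_from_invariant_hull) auto
qed

lemma lucasU_bounds:
  assumes "0 \<le> r" and "r \<le> 1"
  shows "- r \<le> lucasU r n \<and> lucasU r n \<le> 2 - r"
  using lucasU_bounds_small[of r n] lucasU_bounds_large[of r n] assms by linarith

locale re_half_param =
  fixes a :: complex and r c :: real
  assumes Re_a: "Re a = 1/2"
    and r_eq: "r = cmod a ^ 2"
    and r_less_1: "r < 1"
    and c_eq: "c = 1 / (1 - r^2)"
begin

definition z :: "nat \<Rightarrow> complex" where
  "z k = of_real c * a ^ (k + 1)"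

definition w :: "nat \<Rightarrow> complex" where
  "w k = 1 - of_real (c * r) * a ^ k"

definition b :: complex where
  "b = a + of_real (c * r^2)"

definition V :: "complex set" where
  "V = insert b (range z \<union> w ` {1..})"

lemma cnj_a: "cnj a = 1 - a"
  using Re_a by (simp add: complex_eq_iff)

lemma cnj_a_mult_a: "cnj a * a = of_real r"
  by (metis complex_norm_square mult.commute of_real_power r_eq)

lemma a_squared: "a * a = a - of_real r"
  using cnj_a_mult_a by (simp add: cnj_a algebra_simps)

lemma r_pos: "0 < r"
proof -
  have "1/4 \<le> Re a ^ 2 + Im a ^ 2"
    by (simp add: Re_a power_divide)
  then show ?thesis
    by (simp add: r_eq cmod_power2)
qed

lemma r_squared_less_1: "r^2 < 1"
  using r_pos r_less_1 by (simp add: power_less_one_iff)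

lemma c_mult: "c * (1 - r^2) = 1"
  using r_squared_less_1 by (simp add: c_eq)

definition pt :: "real \<Rightarrow> real \<Rightarrow> complex" where
  "pt x y = of_real x + of_real y * a"

lemma pt_in_convex_hull_3:
  assumes "pt x1 y1 \<in> S" "pt x2 y2 \<in> S" "pt x3 y3 \<in> S"
    and "0 < d" "0 \<le> l1" "0 \<le> l2" "0 \<le> l3" "l1 + l2 + l3 = d"
    and "d * x = l1 * x1 + l2 * x2 + l3 * x3" "d * y = l1 * y1 + l2 * y2 + l3 * y3"
  shows "pt x y \<in> convex hull S"
proof (rule in_convex_hull_3_weighted[OF assms(1-8)])
  have "d *\<^sub>R pt x y = of_real (d * x) + of_real (d * y) * a"
    by (simp add: pt_def scaleR_conv_of_real algebra_simps)
  also have "\<dots> = l1 *\<^sub>R pt x1 y1 + l2 *\<^sub>R pt x2 y2 + l3 *\<^sub>R pt x3 y3"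
    unfolding assms(9,10) by (simp add: pt_def scaleR_conv_of_real algebra_simps)
  finally show "d *\<^sub>R pt x y = l1 *\<^sub>R pt x1 y1 + l2 *\<^sub>R pt x2 y2 + l3 *\<^sub>R pt x3 y3" .
qed

lemma a_power_Suc: "a ^ Suc n = pt (- r * lucasU r n) (lucasU r (Suc n))"
proof (induction n)
  case 0
  then show ?case by (simp add: pt_def)
next
  case (Suc n)
  have "a ^ Suc (Suc n) = a * pt (- r * lucasU r n) (lucasU r (Suc n))"
    by (simp only: power_Suc[of a "Suc n"] Suc.IH)
  also have "\<dots> = of_real (- r * lucasU r n) * a + of_real (lucasU r (Suc n)) * (a * a)"
    by (simp add: pt_def algebra_simps)
  also have "\<dots> = pt (- r * lucasU r (Suc n)) (lucasU r (Suc (Suc n)))"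
    by (simp add: a_squared pt_def algebra_simps)
  finally show ?case .
qed

lemma z_eq_pt: "z k = pt (- c * r * lucasU r k) (c * lucasU r (Suc k))"
  by (simp only: z_def Suc_eq_plus1[symmetric] a_power_Suc) (simp add: pt_def algebra_simps)

lemma w_Suc_eq_pt: "w (Suc k) = pt (1 + c * r^2 * lucasU r k) (- c * r * lucasU r (Suc k))"
  by (simp only: w_def a_power_Suc) (simp add: pt_def algebra_simps power2_eq_square)

lemma z_in_V: "z k \<in> V"
  by (simp add: V_def)

lemma w_in_V: "1 \<le> k \<Longrightarrow> w k \<in> V"
  by (simp add: V_def)

lemma b_in_V: "b \<in> V"
  by (simp add: V_def)

lemma pt_vertices_in_V:
  "pt 0 c \<in> V" "pt (- c * r) c \<in> V" "pt (- c * r) (c * (1 - r)) \<in> V"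
  "pt 1 (- c * r) \<in> V" "pt (1 + c * r^2) (- c * r) \<in> V"
  using z_in_V[of 0] z_in_V[of "Suc 0"] z_in_V[of "Suc (Suc 0)"]
    w_in_V[of "Suc 0"] w_in_V[of "Suc (Suc 0)"]
  by (simp_all only: z_eq_pt w_Suc_eq_pt) (simp_all add: algebra_simps)

lemma w_0_in_convex_hull: "w 0 \<in> convex hull V"
proof -
  have "w 0 = pt (1 - c * r) 0"
    by (simp add: w_def pt_def)
  also have "\<dots> \<in> convex hull V"
  proof (rule pt_in_convex_hull_3[OF pt_vertices_in_V(4,2,3),
        of "1 + r - r^2" "1 - r^2" "r * (1 - r)" "r^2"])
    show "0 < 1 + r - r^2" "0 \<le> 1 - r^2" "0 \<le> r * (1 - r)"
      using r_pos r_less_1 r_squared_less_1 by auto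
    show "(1 + r - r^2) * (1 - c * r) = (1 - r^2) * 1 + r * (1 - r) * (- c * r) + r^2 * (- c * r)"
      using c_mult by algebra
  qed (simp_all add: algebra_simps power2_eq_square)
  finally show ?thesis .
qed

lemma f1_b_in_convex_hull: "a * b \<in> convex hull V"
proof -
  have "a * b = pt (- r) (1 + c * r^2)"
    by (simp only: b_def distrib_left a_squared) (simp add: pt_def algebra_simps)
  also have "\<dots> \<in> convex hull V"
  proof (rule pt_in_convex_hull_3[OF pt_vertices_in_V(2,1,1), of 1 "1 - r^2" "r^2" 0])
    show "0 \<le> 1 - r^2"
      using r_squared_less_1 by simp
    show "1 * - r = (1 - r^2) * (- c * r) + r^2 * 0 + 0 * 0"
      using c_mult by algebra
    show "1 * (1 + c * r^2) = (1 - r^2) * c + r^2 * c + 0 * c"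
      using c_mult by algebra
  qed simp_all
  finally show ?thesis .
qed

lemma f1_z: "a * z k = z (Suc k)"
  by (simp add: z_def algebra_simps)

lemma f2_b_in_convex_hull: "1 - cnj a * b \<in> convex hull V"
proof -
  have "1 - cnj a * b = 1 - cnj a * a - of_real (c * r^2) * cnj a"
    by (simp add: b_def algebra_simps)
  also have "\<dots> = pt (1 - r - c * r^2) (c * r^2)"
    by (simp only: cnj_a_mult_a) (simp add: cnj_a pt_def algebra_simps)
  also have "\<dots> \<in> convex hull V"
  proof (rule pt_in_convex_hull_3[OF pt_vertices_in_V(5,2,3),
        of "1 + r" "(1 - r) * (1 + r - r^2)" "2 * r^2" "r * (1 - r) * (1 + r)"])
    have "0 \<le> 1 + r - r^2"
      using r_pos r_squared_less_1 by simp
    then show "0 < 1 + r" "0 \<le> (1 - r) * (1 + r - r^2)" "0 \<le> 2 * r^2" "0 \<le> r * (1 - r) * (1 + r)"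
      using r_pos r_less_1 by auto
    show "(1 + r) * (1 - r - c * r^2) = (1 - r) * (1 + r - r^2) * (1 + c * r^2)
        + 2 * r^2 * (- c * r) + r * (1 - r) * (1 + r) * (- c * r)"
      using c_mult by algebra
  qed (simp_all add: algebra_simps power2_eq_square)
  finally show ?thesis .
qed

lemma f2_z: "1 - cnj a * z k = w k"
proof -
  have "cnj a * z k = of_real c * (cnj a * a) * a ^ k"
    by (simp add: z_def algebra_simps)
  then show ?thesis
    by (simp add: w_def cnj_a_mult_a)
qed

lemma f2_w_Suc: "1 - cnj a * w (Suc k) = a + of_real (c * r^2) * a ^ k"
proof -
  have "1 - cnj a * w (Suc k) = (1 - cnj a) + of_real (c * r) * (cnj a * a) * a ^ k"
    by (simp add: w_def algebra_simps)
  also have "\<dots> = a + of_real (c * r^2) * a ^ k"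
    by (simp only: cnj_a_mult_a) (simp add: cnj_a power2_eq_square)
  finally show ?thesis .
qed

lemma a_plus_power_in_convex_hull: "a + of_real (c * r^2) * a ^ k \<in> convex hull V"
proof (cases k)
  case 0
  then show ?thesis
    using b_in_V by (simp add: b_def hull_inc)
next
  case (Suc i)
  show ?thesis
  proof (rule in_convex_hull_3_weighted[of "z 0" V "z i" "z i" 1 "1 - r^2" "r^2" 0])
    have "(1 - r^2) *\<^sub>R z 0 = of_real (c * (1 - r^2)) * a"
      by (simp add: z_def scaleR_conv_of_real algebra_simps)
    then have "(1 - r^2) *\<^sub>R z 0 = a"
      by (simp only: c_mult) simp
    moreover have "a + of_real (c * r^2) * a ^ k = a + r^2 *\<^sub>R z i"
      by (simp add: Suc z_def scaleR_conv_of_real algebra_simps)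
    ultimately show "1 *\<^sub>R (a + of_real (c * r^2) * a ^ k)
        = (1 - r^2) *\<^sub>R z 0 + r^2 *\<^sub>R z i + 0 *\<^sub>R z i"
      by simp
  qed (use r_squared_less_1 z_in_V in auto)
qed

lemma pt_in_convex_hull_z0_z1_w:
  assumes "- r \<le> q" "- r \<le> q - r * p" "q - r * p \<le> 1 - r"
    and "pt (1 + c * r^2 * p) (- c * r * q) \<in> V"
  shows "pt (c * r^2 * p) (1 - c * r * q) \<in> convex hull V"
proof (rule pt_in_convex_hull_3[OF pt_vertices_in_V(1,2) assms(4),
      of "1 + r * q" "(1 - r^2) * (1 - r + r * p - q)" "(1 - r^2) * (q - r * p + r)" "r * (q + r)"])
  have "- (r^2) \<le> r * q"
    using mult_left_mono[OF assms(1), of r] r_pos by (simp add: power2_eq_square)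
  then show "0 < 1 + r * q"
    using r_squared_less_1 by linarith
  show "0 \<le> (1 - r^2) * (1 - r + r * p - q)" "0 \<le> (1 - r^2) * (q - r * p + r)" "0 \<le> r * (q + r)"
    using assms(1-3) r_pos r_squared_less_1 by simp_all
  show "(1 + r * q) * (c * r^2 * p) = (1 - r^2) * (1 - r + r * p - q) * 0
      + (1 - r^2) * (q - r * p + r) * (- c * r) + r * (q + r) * (1 + c * r^2 * p)"
    using c_mult by algebra
  show "(1 + r * q) * (1 - c * r * q) = (1 - r^2) * (1 - r + r * p - q) * c
      + (1 - r^2) * (q - r * p + r) * c + r * (q + r) * (- c * r * q)"
    using c_mult by algebra
qed (simp add: algebra_simps power2_eq_square)

lemma pt_in_convex_hull_z1_z2_w:
  assumes "- r \<le> p" "1 - r \<le> q - r * p" "q - r * p \<le> 2 - r"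
    and "pt (1 + c * r^2 * p) (- c * r * q) \<in> V"
  shows "pt (c * r^2 * p) (1 - c * r * q) \<in> convex hull V"
proof (rule pt_in_convex_hull_3[OF pt_vertices_in_V(2,3) assms(4),
      of "r^2 * p + 1 + r - r^2" "(1 - r^2) * (r * p - q + 2 - r)" "(1 - r^2) * (q - r * p - 1 + r)"
        "r * (r * p + 1)"])
  have "- (r^2) \<le> r * p"
    using mult_left_mono[OF assms(1), of r] r_pos by (simp add: power2_eq_square)
  then show "0 \<le> r * (r * p + 1)"
    using r_pos r_squared_less_1 by simp
  have "- (r^2 * r) \<le> r^2 * p"
    using mult_left_mono[OF assms(1), of "r^2"] by simp
  moreover have "0 < (1 - r^2) * (1 + r)"
    using r_pos r_squared_less_1 by simp
  ultimately show "0 < r^2 * p + 1 + r - r^2"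
    by (simp add: algebra_simps)
  show "0 \<le> (1 - r^2) * (r * p - q + 2 - r)" "0 \<le> (1 - r^2) * (q - r * p - 1 + r)"
    using assms(2,3) r_squared_less_1 by simp_all
  show "(r^2 * p + 1 + r - r^2) * (c * r^2 * p) = (1 - r^2) * (r * p - q + 2 - r) * (- c * r)
      + (1 - r^2) * (q - r * p - 1 + r) * (- c * r) + r * (r * p + 1) * (1 + c * r^2 * p)"
    using c_mult by algebra
  show "(r^2 * p + 1 + r - r^2) * (1 - c * r * q) = (1 - r^2) * (r * p - q + 2 - r) * c
      + (1 - r^2) * (q - r * p - 1 + r) * (c * (1 - r)) + r * (r * p + 1) * (- c * r * q)"
    using c_mult by algebra
qed (simp add: algebra_simps power2_eq_square)

lemma f1_w_in_convex_hull: "a * w k \<in> convex hull V"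
proof -
  define p q where "p = lucasU r k" and "q = lucasU r (Suc k)"
  have bounds: "- r \<le> lucasU r n \<and> lucasU r n \<le> 2 - r" for n
    using lucasU_bounds r_pos r_less_1 by simp
  have next_term: "lucasU r (Suc (Suc k)) = q - r * p"
    by (simp add: p_def q_def)
  have "a * w k = a - of_real (c * r) * a ^ Suc k"
    by (simp add: w_def algebra_simps)
  also have "\<dots> = pt (c * r^2 * p) (1 - c * r * q)"
    by (simp only: a_power_Suc p_def q_def) (simp add: pt_def algebra_simps power2_eq_square)
  finally have a_w: "a * w k = pt (c * r^2 * p) (1 - c * r * q)" .
  have "pt (1 + c * r^2 * p) (- c * r * q) \<in> V"
    using w_in_V[of "Suc k"] by (simp add: w_Suc_eq_pt p_def q_def)
  then show ?thesis
    unfolding a_w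
    using pt_in_convex_hull_z0_z1_w pt_in_convex_hull_z1_z2_w bounds[of k] bounds[of "Suc k"]
      bounds[of "Suc (Suc k)"]
    by (cases "q - r * p \<le> 1 - r") (simp_all add: next_term p_def q_def)
qed

lemma f1_image_convex_hull_subset: "(\<lambda>x. a * x) ` (convex hull V) \<subseteq> convex hull V"
proof -
  have "(\<lambda>x. a * x) ` V \<subseteq> convex hull V"
    using f1_b_in_convex_hull f1_w_in_convex_hull z_in_V
    by (auto simp: V_def f1_z intro: hull_inc)
  then show ?thesis
    using affine_image_convex_hull_subset[of "\<lambda>x. a * x" 0 V] by simp
qed

lemma f2_image_convex_hull_subset: "(\<lambda>x. 1 - cnj a * x) ` (convex hull V) \<subseteq> convex hull V"
proof -
  have "1 - cnj a * w k \<in> convex hull V" if "1 \<le> k" for k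
    using that f2_w_Suc[of "k - 1"] a_plus_power_in_convex_hull[of "k - 1"] by simp
  moreover have "w k \<in> convex hull V" for k
    using w_0_in_convex_hull w_in_V[of k] by (cases k) (auto intro: hull_inc)
  ultimately have "(\<lambda>x. 1 - cnj a * x) ` V \<subseteq> convex hull V"
    using f2_b_in_convex_hull by (auto simp: V_def f2_z)
  then show ?thesis
    using affine_image_convex_hull_subset[of "\<lambda>x. - cnj a * x" 1 V] linear_times[of "- cnj a"]
    by simp
qed

end

theorem lemma3p3:
  fixes \<eta> :: real
  assumes "0 < \<eta>" and "\<eta> < pi / 3"
  shows "f1 \<eta> ` (convex hull (Vset \<eta>)) \<union> f2 \<eta> ` (convex hull (Vset \<eta>))
           \<subseteq> convex hull (Vset \<eta>)"
proof -
  define a where "a = a_par \<eta>"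
  have "1/2 < cos \<eta>"
    using cos_monotone_0_pi[of \<eta> "pi/3"] assms by (simp add: cos_60)
  moreover have "a = cis (- \<eta>) / of_real (2 * cos \<eta>)"
    by (simp add: a_def a_par_def cis_conv_exp)
  ultimately have Re_a: "Re a = 1/2" and norm_a: "cmod a = 1 / (2 * cos \<eta>)"
    by (simp_all add: norm_divide)
  interpret re_half_param a "cmod a ^ 2" "c_par \<eta>"
  proof
    show "cmod a ^ 2 < 1"
      using \<open>1/2 < cos \<eta>\<close> by (simp add: norm_a power_less_one_iff)
    show "c_par \<eta> = 1 / (1 - (cmod a ^ 2)^2)"
      by (simp add: c_par_def a_def flip: power_mult)
  qed (use Re_a in simp_all)
  have "Vset \<eta> = V"
    unfolding Vset_def bk_def zk_def wk_def a_def[symmetric]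
    by (auto simp: V_def b_def z_def w_def simp flip: power_mult)
  moreover have "f1 \<eta> = (\<lambda>x. a * x)" and "f2 \<eta> = (\<lambda>x. 1 - cnj a * x)"
    by (simp_all add: fun_eq_iff f1_def f2_def a_def)
  ultimately show ?thesis
    using f1_image_convex_hull_subset f2_image_convex_hull_subset by simp
qed

end
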